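(* Let $n=2^i m$ with $i\geq 1$ and $m\geq 3$ odd. Suppose $f\in\mathbb{F}_{2^m}[x]$ is a 3-divisible Dembowski–Ostrom polynomial which is APN on $\mathbb{F}_{2^n}$. Then $f$ induces an APN permutation of the subfield $\mathbb{F}_{2^m}$.
   Context: A polynomial over $\mathbb{F}_{2^n}$ is Dembowski–Ostrom if it is of the form $\sum_{i\neq j}a_{ij}x^{2^i+2^j}$. It is 3-divisible if $f(x)=f'(x^3)$ for some map $f'$. A map $f$ on $\mathbb{F}_{2^N}$ is APN if for every $a\neq 0$ and every $b$ the equation $f(x+a)+f(x)=b$ has at most 2 solutions in $\mathbb{F}_{2^N}$. *)

theory Defs
  imports "HOL-Computational_Algebra.Polynomial"
begin

text \<open>The subfield F_{2^m} of a finite field of characteristic 2, as the fixed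
  points of the 2^m-th power Frobenius map.\<close>
definition subfield_pow2 :: "nat \<Rightarrow> 'a::field set" where
  "subfield_pow2 m = {x. x ^ (2 ^ m) = x}"

definition DO_poly :: "'a::field poly \<Rightarrow> bool" where
  "DO_poly f \<longleftrightarrow> (\<forall>k. coeff f k \<noteq> 0 \<longrightarrow> (\<exists>i j. i \<noteq> j \<and> k = 2 ^ i + 2 ^ j))"

definition three_divisible :: "('a::field \<Rightarrow> 'a) \<Rightarrow> bool" where
  "three_divisible g \<longleftrightarrow> (\<exists>g'. \<forall>x. g x = g' (x ^ 3))"

definition APN_on :: "'a::field set \<Rightarrow> ('a \<Rightarrow> 'a) \<Rightarrow> bool" where
  "APN_on S g \<longleftrightarrow>
     (\<forall>a\<in>S. a \<noteq> 0 \<longrightarrow> (\<forall>b\<in>S. card {x\<in>S. g (x + a) + g x = b} \<le> 2))"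

end

theory Submission
  imports Defs
begin

text \<open>
  Since \<open>n\<close> is even, \<open>3\<close> divides \<open>2\<^sup>n - 1\<close>, so the field contains a primitive cube root
  of unity \<open>w\<close>; since \<open>m\<close> is odd, neither \<open>w\<close> nor \<open>w\<^sup>2 = w + 1\<close> lies in the subfield \<open>K\<close>
  of order \<open>2\<^sup>m\<close>. A 3-divisible \<open>f\<close> satisfies \<open>f (w a) = f (w\<^sup>2 a) = f a\<close>, so \<open>w a\<close> and
  \<open>w\<^sup>2 a\<close> are zeros of \<open>u \<mapsto> f (u + a) + f u\<close>. If \<open>f x = f y\<close> for distinct \<open>x, y \<in> K\<close>,
  then for \<open>a = x + y\<close> also \<open>x\<close> is such a zero, and these three zeros contradict APN-ness.
  So \<open>f\<close> is injective, hence bijective, on \<open>K\<close>; APN-ness passes to subsets.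
\<close>

lemma power_card_minus_1_eq_1:
  fixes x :: "'a::{field,finite}"
  assumes "x \<noteq> 0"
  shows "x ^ (card (UNIV :: 'a set) - 1) = 1"
proof -
  have "(\<Prod>y\<in>UNIV-{0}. x * y) = x ^ (card (UNIV :: 'a set) - 1) * \<Prod>(UNIV-{0})"
    by (simp add: prod.distrib mult_ac)
  moreover have "(\<Prod>y\<in>UNIV-{0}. x * y) = \<Prod>(UNIV-{0})"
    by (rule prod.reindex_bij_witness[of _ "\<lambda>y. y / x" "\<lambda>y. x * y"]) (use assms in auto)
  moreover have "\<Prod>(UNIV-{0::'a}) \<noteq> 0"
    by simp
  ultimately show ?thesis
    by simp
qed

lemma CHAR_eq_2_if_card_eq_power_2:
  assumes "card (UNIV :: 'a::{field,finite} set) = 2 ^ n"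
  shows "CHAR('a) = 2"
proof -
  have "n \<noteq> 0"
  proof
    assume "n = 0"
    with assms have "card (UNIV :: 'a set) = 1"
      by simp
    then show False
      by (metis (full_types) card_1_singletonE UNIV_I singletonD zero_neq_one)
  qed
  then have "odd (card (UNIV :: 'a set) - 1)"
    using assms by simp
  then have "(-1::'a) = 1"
    using power_card_minus_1_eq_1[of "-1::'a"] by simp
  then have "of_nat 2 = (0::'a)"
    by (metis add_eq_0_iff2 of_nat_1 of_nat_add one_add_one)
  then have "CHAR('a) dvd 2"
    by (simp only: of_nat_eq_0_iff_char_dvd)
  then show ?thesis
    using CHAR_not_1[where 'a='a] two_is_prime_nat unfolding prime_nat_iff by auto
qed

lemma add_self_CHAR_2:
  assumes "CHAR('a::ring_1) = 2"
  shows "(x::'a) + x = 0"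
  by (metis assms add.right_inverse uminus_CHAR_2)

lemma subfield_pow2_add:
  assumes "CHAR('a::field) = 2" "x \<in> subfield_pow2 m" "y \<in> subfield_pow2 m"
  shows "(x::'a) + y \<in> subfield_pow2 m"
  using assms freshmans_dream'[where 'a='a and m="2 ^ m" and n=m] unfolding subfield_pow2_def by simp

lemma subfield_pow2_mult:
  "x \<in> subfield_pow2 m \<Longrightarrow> y \<in> subfield_pow2 m \<Longrightarrow> (x::'a::field) * y \<in> subfield_pow2 m"
  unfolding subfield_pow2_def by (simp add: power_mult_distrib)

lemma subfield_pow2_divide:
  "x \<in> subfield_pow2 m \<Longrightarrow> y \<in> subfield_pow2 m \<Longrightarrow> (x::'a::field) / y \<in> subfield_pow2 m"
  unfolding subfield_pow2_def by (simp add: power_divide)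

lemma poly_in_subfield_pow2:
  fixes p :: "'a::field poly"
  assumes "CHAR('a) = 2" "\<forall>k. coeff p k \<in> subfield_pow2 m" "x \<in> subfield_pow2 m"
  shows "poly p x \<in> subfield_pow2 m"
  using assms(2)
proof (induction p rule: pCons_induct)
  case 0
  then show ?case by (simp add: subfield_pow2_def)
next
  case (pCons a p)
  then have "a \<in> subfield_pow2 m" "\<forall>k. coeff p k \<in> subfield_pow2 m"
    by (metis coeff_pCons_0, metis coeff_pCons_Suc)
  with pCons.IH show ?case
    by (simp add: subfield_pow2_add[OF assms(1)] subfield_pow2_mult[OF assms(3)])
qed

lemma exists_primitive_cube_root_of_unity:
  assumes "card (UNIV :: 'a::{field,finite} set) mod 3 = 1"
  shows "\<exists>w::'a. w ^ 3 = 1 \<and> w \<noteq> 1"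
proof (rule ccontr)
  define d where "d = card (UNIV :: 'a set) div 3"
  have card: "card (UNIV :: 'a set) - 1 = 3 * d"
    using assms unfolding d_def by presburger
  have "card {0::'a, 1} \<le> card (UNIV :: 'a set)"
    by (rule card_mono) simp_all
  then have "d \<ge> 1"
    using card by simp
  assume no_root: "\<not> (\<exists>w::'a. w ^ 3 = 1 \<and> w \<noteq> 1)"
  have "inj (\<lambda>x::'a. x ^ 3)"
  proof (rule injI)
    fix x y :: 'a
    assume "x ^ 3 = y ^ 3"
    with no_root show "x = y"
      by (cases "y = 0") (auto simp: power_divide dest: spec[of _ "x / y"])
  qed
  then have cubes: "surj (\<lambda>x::'a. x ^ 3)"
    by (simp add: finite_UNIV_inj_surj)
  \<comment> \<open>so every nonzero element is a cube, hence a root of \<open>X\<^sup>d - 1\<close>: too many roots\<close>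
  define p :: "'a poly" where "p = monom 1 d - 1"
  have "p \<noteq> 0"
    using \<open>d \<ge> 1\<close> by (auto simp: p_def poly_eq_iff dest: spec[of _ d])
  have "poly p z = 0" if "z \<noteq> 0" for z
  proof -
    obtain x where x: "z = x ^ 3"
      using cubes by (metis surjD)
    then have "z ^ d = x ^ (card (UNIV :: 'a set) - 1)"
      by (metis card power_mult)
    also have "\<dots> = 1"
      using that x by (intro power_card_minus_1_eq_1) simp
    finally show ?thesis
      by (simp add: p_def poly_monom)
  qed
  then have "card (UNIV - {0::'a}) \<le> card {x. poly p x = 0}"
    by (intro card_mono poly_roots_finite[OF \<open>p \<noteq> 0\<close>]) auto
  also have "\<dots> \<le> degree p"
    by (rule card_poly_roots_bound[OF \<open>p \<noteq> 0\<close>])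
  also have "\<dots> \<le> d"
    unfolding p_def by (intro degree_diff_le degree_monom_le) simp
  finally show False
    using card \<open>d \<ge> 1\<close> by (simp add: card_Diff_singleton)
qed

lemma primitive_cube_root_of_unity_square:
  assumes "CHAR('a::field) = 2" "(w::'a) ^ 3 = 1" "w \<noteq> 1"
  shows "w ^ 2 = w + 1"
proof -
  have "(w - 1) * (w ^ 2 + w + 1) = 0"
    using assms(2) by (simp add: algebra_simps power2_eq_square power3_eq_cube)
  then have "w ^ 2 + (w + 1) = 0"
    using assms(3) by (simp add: add.assoc)
  then have "w ^ 2 = - (w + 1)"
    using add_eq_0_iff2 by blast
  then show ?thesis
    using assms(1) by (simp add: uminus_CHAR_2)
qed

lemma primitive_cube_root_of_unity_power2:
  assumes "(w::'a::field) ^ 3 = 1" "w \<noteq> 1"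
  shows "(w ^ 2) ^ 3 = 1" "w ^ 2 \<noteq> 1"
proof -
  show "(w ^ 2) ^ 3 = 1"
    using assms(1) by (metis power_mult power_one mult.commute)
  show "w ^ 2 \<noteq> 1"
  proof
    assume "w ^ 2 = 1"
    then have "w ^ 3 = w"
      by (simp add: power3_eq_cube power2_eq_square)
    with assms show False
      by simp
  qed
qed

lemma primitive_cube_root_of_unity_notin_subfield_pow2:
  assumes "(w::'a::field) ^ 3 = 1" "w \<noteq> 1" "odd m"
  shows "w \<notin> subfield_pow2 m"
proof
  obtain j where "m = 2 * j + 1"
    using \<open>odd m\<close> oddE by blast
  then have "(2::nat) ^ m mod 3 = (2 * (4 ^ j mod 3)) mod 3"
    by (simp add: power_mult mod_mult_right_eq)
  also have "\<dots> = 2"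
    by (simp add: power_mod[of 4, symmetric])
  finally have "w ^ (2 ^ m) = w ^ (3 * (2 ^ m div 3) + 2)"
    by (metis div_mult_mod_eq mult.commute)
  then have "w ^ (2 ^ m) = w ^ 2"
    using assms(1) by (simp add: power_add power_mult power2_eq_square)
  moreover assume "w \<in> subfield_pow2 m"
  ultimately have "w * w = 1 * w"
    by (simp add: subfield_pow2_def power2_eq_square)
  moreover have "w \<noteq> 0"
    using assms(1) by auto
  ultimately show False
    using assms(2) by simp
qed

lemma three_divisible_derivative_eq_0:
  assumes "CHAR('a::field) = 2" "three_divisible g" "(w::'a) ^ 3 = 1" "w \<noteq> 1"
  shows "g (w * a + a) + g (w * a) = 0"
proof -
  obtain g' where g: "\<And>x. g x = g' (x ^ 3)"
    using assms(2) unfolding three_divisible_def by blast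
  have "w * a + a = w ^ 2 * a"
    using primitive_cube_root_of_unity_square[OF assms(1,3,4)] by (simp add: algebra_simps)
  moreover have "(w * a) ^ 3 = a ^ 3"
    using assms(3) by (simp add: power_mult_distrib)
  moreover have "(w ^ 2 * a) ^ 3 = (w ^ 3) ^ 2 * a ^ 3"
    by (simp add: power_mult_distrib flip: power_mult)
  ultimately show ?thesis
    using assms(3) by (simp add: g add_self_CHAR_2[OF assms(1)])
qed

lemma APN_on_mono:
  assumes "APN_on T g" "S \<subseteq> T" "finite T"
  shows "APN_on S g"
  unfolding APN_on_def
proof (intro ballI impI)
  fix a b assume "a \<in> S" "a \<noteq> 0" "b \<in> S"
  have "card {x \<in> S. g (x + a) + g x = b} \<le> card {x \<in> T. g (x + a) + g x = b}"
    using assms(2,3) by (intro card_mono) auto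
  also have "\<dots> \<le> 2"
    using assms(1,2) \<open>a \<in> S\<close> \<open>a \<noteq> 0\<close> \<open>b \<in> S\<close> unfolding APN_on_def by blast
  finally show "card {x \<in> S. g (x + a) + g x = b} \<le> 2" .
qed

lemma three_divisible_APN_inj_on_subfield_pow2:
  fixes g :: "'a::{field,finite} \<Rightarrow> 'a" and w :: 'a
  assumes "CHAR('a) = 2" "odd m" "three_divisible g" "APN_on UNIV g"
    and "w ^ 3 = 1" "w \<noteq> 1"
  shows "inj_on g (subfield_pow2 m)"
proof (rule inj_onI, rule ccontr)
  define S :: "'a set" where "S = subfield_pow2 m"
  fix x y
  assume "x \<in> subfield_pow2 m" "y \<in> subfield_pow2 m" "g x = g y" "x \<noteq> y"
  then have "x \<in> S" "y \<in> S"
    by (simp_all add: S_def)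
  define a where "a = x + y"
  have "a \<in> S"
    using \<open>x \<in> S\<close> \<open>y \<in> S\<close> by (simp add: S_def a_def subfield_pow2_add[OF assms(1)])
  have "a \<noteq> 0"
    using \<open>x \<noteq> y\<close> assms(1) by (auto simp: a_def add_eq_0_iff2 uminus_CHAR_2)
  have "x + a = y"
    using assms(1) by (simp add: a_def add_self_CHAR_2 flip: add.assoc)
  have "w \<notin> S" "w ^ 2 \<notin> S"
    using primitive_cube_root_of_unity_notin_subfield_pow2[OF assms(5,6,2)]
      primitive_cube_root_of_unity_notin_subfield_pow2[OF
        primitive_cube_root_of_unity_power2[OF assms(5,6)] assms(2)]
    by (simp_all add: S_def)
  moreover have "x \<noteq> c * a" if "c \<notin> S" for c
    using that \<open>x \<in> S\<close> \<open>a \<in> S\<close> \<open>a \<noteq> 0\<close> subfield_pow2_divide[of x m a]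
    by (auto simp: S_def)
  ultimately have "x \<noteq> w * a" "x \<noteq> w ^ 2 * a"
    by blast+
  define D where "D = {u. g (u + a) + g u = 0}"
  have "x \<in> D"
    using \<open>x + a = y\<close> \<open>g x = g y\<close> assms(1) by (simp add: D_def add_self_CHAR_2)
  moreover have "w * a \<in> D" "w ^ 2 * a \<in> D"
    using three_divisible_derivative_eq_0[OF assms(1,3,5,6)]
      three_divisible_derivative_eq_0[OF assms(1,3) primitive_cube_root_of_unity_power2[OF assms(5,6)]]
    by (simp_all add: D_def)
  moreover have "w * a \<noteq> w ^ 2 * a"
    using \<open>a \<noteq> 0\<close> assms(5,6) by (auto simp: power2_eq_square)
  ultimately have "card {x, w * a, w ^ 2 * a} \<le> card D"
    by (intro card_mono) auto
  also have "card D \<le> 2"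
    using assms(4) \<open>a \<noteq> 0\<close> unfolding APN_on_def D_def by simp
  finally show False
    using \<open>x \<noteq> w * a\<close> \<open>x \<noteq> w ^ 2 * a\<close> \<open>w * a \<noteq> w ^ 2 * a\<close> by simp
qed

theorem theorem5p1:
  fixes f :: "'a::{field,finite} poly" and n m i :: nat
  assumes "card (UNIV :: 'a set) = 2 ^ n"
    and "n = 2 ^ i * m" and "i \<ge> 1" and "m \<ge> 3" and "odd m"
    and "\<forall>k. coeff f k \<in> subfield_pow2 m"
    and "DO_poly f"
    and "three_divisible (poly f)"
    and "APN_on UNIV (poly f)"
  shows "bij_betw (poly f) (subfield_pow2 m) (subfield_pow2 m)
         \<and> APN_on (subfield_pow2 m) (poly f)"
proof -
  have char: "CHAR('a) = 2"
    using CHAR_eq_2_if_card_eq_power_2[OF assms(1)] .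
  have "even n"
    using assms(2,3) by simp
  then obtain t where "n = 2 * t" ..
  then have "card (UNIV :: 'a set) mod 3 = 1"
    using assms(1) by (simp add: power_mult power_mod[of 4, symmetric])
  then obtain w :: 'a where "w ^ 3 = 1" "w \<noteq> 1"
    using exists_primitive_cube_root_of_unity by blast
  then have "inj_on (poly f) (subfield_pow2 m)"
    using three_divisible_APN_inj_on_subfield_pow2 char assms(5,8,9) by blast
  moreover have "poly f ` subfield_pow2 m \<subseteq> subfield_pow2 m"
    using poly_in_subfield_pow2[OF char assms(6)] by blast
  ultimately have "bij_betw (poly f) (subfield_pow2 m) (subfield_pow2 m)"
    by (simp add: bij_betw_def endo_inj_surj)
  moreover have "APN_on (subfield_pow2 m) (poly f)"
    using APN_on_mono[OF assms(9)] by simp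
  ultimately show ?thesis ..
qed

end
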